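(* For $n\ge 2$ let $X^n$ be the continuous-time Markov chain on $V_n=\{v_0,\dots,v_{2n}\}$, $A=v_0$, $B=v_n$, $C=v_{2n}$, with nonzero jump rates $q(v_i,v_{i+1})=1$ for $0\le i\le 2n-1$, $i\neq n$; $q(B,v_{n+1})=1/n$, $q(B,C)=1-1/n$; $q(v_{i+1},v_i)=2^{-n^2}$ for $0\le i\le 2n-1$; $q(C,B)=(n-1)2^{-n^3}$. Let $\mathbb P^{n,A}$ denote the law of $X^n$ started at $A$ and $\tau$ the hitting time of $C$. Then \[ \lim_{n\to\infty} n\,\mathbb P^{n,A}(\tau>ns)=\begin{cases}\infty & \text{if } s<1,\\ 1 & \text{if } s\in(1,2),\\ 0 & \text{if } s>2.\end{cases} \]
   Context: The graph underlying $X^n$ is a path $v_0\cdots v_{2n}$ plus an extra edge $B$–$C$; transitions occur only along edges with the given rates. *)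

theory Defs
  imports Complex_Main
begin

text \<open>States v_0,...,v_{2n} are encoded as the naturals 0..2n; A = 0, B = n, C = 2n.\<close>

definition rate :: "nat \<Rightarrow> nat \<Rightarrow> nat \<Rightarrow> real" where
  "rate n i j =
     (if j = i + 1 \<and> i < 2*n then (if i = n then 1 / real n else 1) else 0)
   + (if i = j + 1 \<and> i \<le> 2*n then (1/2) ^ (n^2) else 0)
   + (if i = n \<and> j = 2*n then 1 - 1 / real n else 0)
   + (if i = 2*n \<and> j = n then (real n - 1) * (1/2) ^ (n^3) else 0)"

definition gen_stopped :: "nat \<Rightarrow> nat \<Rightarrow> nat \<Rightarrow> real" where
  "gen_stopped n i j =
     (if i = 2*n then 0
      else if i = j then - (\<Sum>l\<in>{..2*n} - {i}. rate n i l)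
      else rate n i j)"

fun matpow :: "(nat \<Rightarrow> nat \<Rightarrow> real) \<Rightarrow> nat \<Rightarrow> nat \<Rightarrow> nat \<Rightarrow> nat \<Rightarrow> real" where
  "matpow Q N 0 i j = (if i = j then 1 else 0)"
| "matpow Q N (Suc k) i j = (\<Sum>l\<le>N. matpow Q N k i l * Q l j)"

definition matexp :: "(nat \<Rightarrow> nat \<Rightarrow> real) \<Rightarrow> nat \<Rightarrow> real \<Rightarrow> nat \<Rightarrow> nat \<Rightarrow> real" where
  "matexp Q N t i j = (\<Sum>k. t ^ k / fact k * matpow Q N k i j)"

text \<open>P^{n,A}(tau > t), tau the hitting time of C: the chain stopped at C
  has not reached C at time t. For t < 0 this probability is 1.\<close>
definition surv :: "nat \<Rightarrow> real \<Rightarrow> real" where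
  "surv n t = 1 - matexp (gen_stopped n) (2*n) (max 0 t) 0 (2*n)"

end

theory Submission
  imports Defs
begin

text \<open>
  Deleting the backward jumps of the chain stopped at C leaves a chain that moves along the path at
  rate 1, except that from B it jumps to C with probability 1 - 1/n; let J be its jump matrix, with C
  absorbing. All deleted rates are at most 2^(-n^2), so in the row-sum norm the stopped generator Q is
  within 2 * 2^(-n^2) of J - I, and comparing exponential series gives
  exp(tQ) = e^(-t) exp(tJ) up to an error 2^(1-n^2) e^(6t), which is negligible even after multiplying
  by n at times t = O(n). Under J, with N_t the Poisson(t) number of jumps,
  P(\<tau> > t) = P(N_t \<le> n) + P(n < N_t < 2n) / n.
  The Chernoff bounds P(N_(mx) < m) \<le> (x e^(1-x))^m for x > 1 and P(N_(mx) \<ge> m) \<le> (x e^(1-x))^m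
  for x < 1, at the levels n and 2n and time t = ns, give the three regimes: for s < 1 the first term
  tends to 1; for 1 < s < 2 it is o(1/n) while the second is asymptotic to 1/n; for s > 2 both are o(1/n).
\<close>

section \<open>Row-sum norm and matrix exponentials\<close>

definition row_norm_le :: "nat \<Rightarrow> (nat \<Rightarrow> nat \<Rightarrow> real) \<Rightarrow> real \<Rightarrow> bool" where
  "row_norm_le N A M \<longleftrightarrow> (\<forall>i\<le>N. (\<Sum>j\<le>N. \<bar>A i j\<bar>) \<le> M)"

lemma row_norm_le_nonneg:
  assumes "row_norm_le N A M"
  shows "0 \<le> M"
proof -
  have "0 \<le> (\<Sum>j\<le>N. \<bar>A 0 j\<bar>)" by (simp add: sum_nonneg)
  also have "\<dots> \<le> M" using assms by (simp add: row_norm_le_def)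
  finally show ?thesis .
qed

lemma row_norm_le_entry:
  assumes "row_norm_le N A M" "i \<le> N" "j \<le> N"
  shows "\<bar>A i j\<bar> \<le> M"
proof -
  have "\<bar>A i j\<bar> \<le> (\<Sum>j\<le>N. \<bar>A i j\<bar>)" using assms(3) by (intro member_le_sum) auto
  also have "\<dots> \<le> M" using assms(1,2) by (simp add: row_norm_le_def)
  finally show ?thesis .
qed

lemma row_norm_le_mono: "row_norm_le N A a \<Longrightarrow> a \<le> b \<Longrightarrow> row_norm_le N A b"
  by (auto simp: row_norm_le_def)

lemma row_norm_le_add:
  assumes "row_norm_le N A a" "row_norm_le N B b"
  shows "row_norm_le N (\<lambda>i j. A i j + B i j) (a + b)"
  unfolding row_norm_le_def
proof (intro allI impI)
  fix i assume "i \<le> N"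
  have "(\<Sum>j\<le>N. \<bar>A i j + B i j\<bar>) \<le> (\<Sum>j\<le>N. \<bar>A i j\<bar>) + (\<Sum>j\<le>N. \<bar>B i j\<bar>)"
    unfolding sum.distrib[symmetric] by (intro sum_mono abs_triangle_ineq)
  also have "\<dots> \<le> a + b"
    using assms \<open>i \<le> N\<close> by (intro add_mono) (auto simp: row_norm_le_def)
  finally show "(\<Sum>j\<le>N. \<bar>A i j + B i j\<bar>) \<le> a + b" .
qed

lemma row_sum_abs_mult_le:
  assumes "row_norm_le N C M"
  shows "(\<Sum>j\<le>N. \<bar>\<Sum>l\<le>N. B i l * C l j\<bar>) \<le> M * (\<Sum>l\<le>N. \<bar>B i l\<bar>)"
proof -
  have "(\<Sum>j\<le>N. \<bar>\<Sum>l\<le>N. B i l * C l j\<bar>) \<le> (\<Sum>j\<le>N. \<Sum>l\<le>N. \<bar>B i l\<bar> * \<bar>C l j\<bar>)"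
    by (intro sum_mono order_trans[OF sum_abs]) (simp add: abs_mult)
  also have "\<dots> = (\<Sum>l\<le>N. \<bar>B i l\<bar> * (\<Sum>j\<le>N. \<bar>C l j\<bar>))"
    by (subst sum.swap) (simp add: sum_distrib_left)
  also have "\<dots> \<le> (\<Sum>l\<le>N. \<bar>B i l\<bar> * M)"
    using assms by (intro sum_mono mult_left_mono) (auto simp: row_norm_le_def)
  finally show ?thesis by (simp add: sum_distrib_left mult.commute)
qed

lemma row_norm_le_matpow:
  assumes "row_norm_le N A M"
  shows "row_norm_le N (matpow A N k) (M ^ k)"
proof (induction k)
  case 0
  show ?case by (simp add: row_norm_le_def if_distrib[of abs] cong: if_cong)
next
  case (Suc k)
  have "M \<ge> 0" using row_norm_le_nonneg[OF assms] .
  then show ?case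
    using row_sum_abs_mult_le[OF assms, of "matpow A N k"] Suc
    by (auto simp: row_norm_le_def intro: order_trans[OF _ mult_left_mono])
qed

lemma row_norm_le_matpow_diff:
  assumes A: "row_norm_le N A M" and B: "row_norm_le N B M"
    and AB: "row_norm_le N (\<lambda>i j. A i j - B i j) e" and M: "1 \<le> M"
  shows "row_norm_le N (\<lambda>i j. matpow A N k i j - matpow B N k i j) (real k * e * M ^ k)"
  unfolding row_norm_le_def
proof (induction k)
  case 0
  show ?case by simp
next
  case (Suc k)
  show ?case
  proof (intro allI impI)
    fix i assume i: "i \<le> N"
    let ?D = "\<lambda>i l. matpow A N k i l - matpow B N k i l"
    have split: "matpow A N (Suc k) i j - matpow B N (Suc k) i j
        = (\<Sum>l\<le>N. ?D i l * A l j) + (\<Sum>l\<le>N. matpow B N k i l * (A l j - B l j))" for j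
      by (simp add: sum.distrib[symmetric] sum_subtractf[symmetric] algebra_simps)
    have e: "0 \<le> e" using row_norm_le_nonneg[OF AB] .
    have "(\<Sum>j\<le>N. \<bar>matpow A N (Suc k) i j - matpow B N (Suc k) i j\<bar>)
        \<le> (\<Sum>j\<le>N. \<bar>\<Sum>l\<le>N. ?D i l * A l j\<bar>) + (\<Sum>j\<le>N. \<bar>\<Sum>l\<le>N. matpow B N k i l * (A l j - B l j)\<bar>)"
      unfolding split by (rule order_trans[OF sum_mono[OF abs_triangle_ineq]]) (simp only: sum.distrib order_refl)
    also have "\<dots> \<le> M * (\<Sum>l\<le>N. \<bar>?D i l\<bar>) + e * (\<Sum>l\<le>N. \<bar>matpow B N k i l\<bar>)"
      by (intro add_mono row_sum_abs_mult_le A AB)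
    also have "\<dots> \<le> M * (real k * e * M ^ k) + e * M ^ k"
      using M e i Suc.IH row_norm_le_matpow[OF B, of k]
      by (intro add_mono mult_left_mono) (auto simp: row_norm_le_def)
    also have "\<dots> \<le> real (Suc k) * e * M ^ Suc k"
      using M e mult_left_mono[OF power_increasing[of k "Suc k" M] e] by (simp add: algebra_simps)
    finally show "(\<Sum>j\<le>N. \<bar>matpow A N (Suc k) i j - matpow B N (Suc k) i j\<bar>) \<le> real (Suc k) * e * M ^ Suc k" .
  qed
qed

lemma exp_sums: "(\<lambda>k. x ^ k / fact k) sums exp (x :: real)"
  using exp_converges[of x] by (simp add: divide_inverse mult.commute)

lemma matexp_summable_abs:
  assumes "row_norm_le N A M" "i \<le> N" "j \<le> N"
  shows "summable (\<lambda>k. \<bar>t ^ k / fact k * matpow A N k i j\<bar>)"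
proof (rule summable_comparison_test'[OF sums_summable[OF exp_sums[of "\<bar>t\<bar> * M"]]])
  fix k
  have "\<bar>matpow A N k i j\<bar> \<le> M ^ k"
    using row_norm_le_entry[OF row_norm_le_matpow[OF assms(1)] assms(2,3)] .
  then have "\<bar>matpow A N k i j\<bar> * (\<bar>t\<bar> ^ k / fact k) \<le> M ^ k * (\<bar>t\<bar> ^ k / fact k)"
    by (intro mult_right_mono) auto
  moreover have "norm \<bar>t ^ k / fact k * matpow A N k i j\<bar> = \<bar>matpow A N k i j\<bar> * (\<bar>t\<bar> ^ k / fact k)"
    by (simp add: abs_mult power_abs)
  moreover have "(\<bar>t\<bar> * M) ^ k / fact k = M ^ k * (\<bar>t\<bar> ^ k / fact k)"
    by (simp add: power_mult_distrib)
  ultimately show "norm \<bar>t ^ k / fact k * matpow A N k i j\<bar> \<le> (\<bar>t\<bar> * M) ^ k / fact k"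
    by linarith
qed

lemma matexp_diff_le:
  assumes A: "row_norm_le N A M" and B: "row_norm_le N B M"
    and AB: "row_norm_le N (\<lambda>i j. A i j - B i j) e" and M: "1 \<le> M" and ij: "i \<le> N" "j \<le> N"
  shows "\<bar>matexp A N t i j - matexp B N t i j\<bar> \<le> e * exp (2 * M * \<bar>t\<bar>)"
proof -
  let ?d = "\<lambda>k. t ^ k / fact k * matpow A N k i j - t ^ k / fact k * matpow B N k i j"
  have e: "0 \<le> e" using row_norm_le_nonneg[OF AB] .
  have bound: "(\<lambda>k. e * ((2 * M * \<bar>t\<bar>) ^ k / fact k)) sums (e * exp (2 * M * \<bar>t\<bar>))"
    by (intro sums_mult exp_sums)
  have d_le: "\<bar>?d k\<bar> \<le> e * ((2 * M * \<bar>t\<bar>) ^ k / fact k)" for k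
  proof -
    have "?d k = t ^ k / fact k * (matpow A N k i j - matpow B N k i j)"
      by (simp add: algebra_simps)
    then have "\<bar>?d k\<bar> = \<bar>t\<bar> ^ k / fact k * \<bar>matpow A N k i j - matpow B N k i j\<bar>"
      by (simp add: abs_mult power_abs)
    also have "\<dots> \<le> \<bar>t\<bar> ^ k / fact k * (real k * e * M ^ k)"
      using row_norm_le_entry[OF row_norm_le_matpow_diff[OF A B AB M, of k] ij]
      by (intro mult_left_mono) auto
    also have "\<dots> \<le> \<bar>t\<bar> ^ k / fact k * (2 ^ k * e * M ^ k)"
      using of_nat_less_two_power[of k, where 'a=real] e M
      by (intro mult_left_mono mult_right_mono) auto
    finally show ?thesis by (simp add: power_mult_distrib algebra_simps)
  qed
  have d_summable: "summable (\<lambda>k. \<bar>?d k\<bar>)"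
    by (rule summable_comparison_test'[OF sums_summable[OF bound]]) (use d_le in simp)
  have diff: "matexp A N t i j - matexp B N t i j = (\<Sum>k. ?d k)"
    unfolding matexp_def
    by (intro suminf_diff summable_rabs_cancel[OF matexp_summable_abs[OF A ij]]
        summable_rabs_cancel[OF matexp_summable_abs[OF B ij]])
  have "\<bar>\<Sum>k. ?d k\<bar> \<le> (\<Sum>k. \<bar>?d k\<bar>)"
    by (rule summable_rabs[OF d_summable])
  also have "\<dots> \<le> e * exp (2 * M * \<bar>t\<bar>)"
    by (rule sums_le[OF _ summable_sums[OF d_summable] bound]) (use d_le in blast)
  finally show ?thesis unfolding diff .
qed

lemma binomial_difference_Suc:
  fixes X :: "nat \<Rightarrow> real"
  shows "(\<Sum>i\<le>Suc k. real (Suc k choose i) * (-1) ^ (Suc k - i) * X i)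
       = (\<Sum>i\<le>k. real (k choose i) * (-1) ^ (k - i) * X (Suc i))
         - (\<Sum>i\<le>k. real (k choose i) * (-1) ^ (k - i) * X i)"
proof -
  have shifted: "(\<Sum>i\<le>k. real (k choose i) * (-1) ^ (k - i) * X i)
      = (-1) ^ k * X 0 - (\<Sum>i\<le>k. real (k choose Suc i) * (-1) ^ (k - i) * X (Suc i))"
  proof -
    have "real (k choose Suc i) * (-1) ^ (k - Suc i) = - (real (k choose Suc i) * (-1) ^ (k - i))"
      if "i \<le> k" for i
      using that by (cases "i = k") (simp_all add: Suc_diff_Suc[symmetric, of i k])
    then have "(\<Sum>i\<le>k. real (k choose Suc i) * (-1) ^ (k - Suc i) * X (Suc i))
        = - (\<Sum>i\<le>k. real (k choose Suc i) * (-1) ^ (k - i) * X (Suc i))"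
      by (simp add: sum_negf[symmetric])
    moreover have "(\<Sum>i\<le>k. real (k choose i) * (-1) ^ (k - i) * X i)
        = (\<Sum>i\<le>Suc k. real (k choose i) * (-1) ^ (k - i) * X i)"
      by simp
    ultimately show ?thesis
      by (simp add: sum.atMost_Suc_shift del: sum.atMost_Suc)
  qed
  show ?thesis
    unfolding shifted
    by (simp add: sum.atMost_Suc_shift sum.distrib[symmetric] algebra_simps del: sum.atMost_Suc)
qed

lemma matpow_minus_identity:
  fixes A :: "nat \<Rightarrow> nat \<Rightarrow> real"
  assumes "j \<le> N"
  shows "matpow (\<lambda>a b. A a b - (if a = b then 1 else 0)) N k r j
       = (\<Sum>i\<le>k. real (k choose i) * (-1) ^ (k - i) * matpow A N i r j)"
  using assms
proof (induction k arbitrary: j)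
  case 0
  then show ?case by simp
next
  case (Suc k)
  let ?c = "\<lambda>i. real (k choose i) * (-1) ^ (k - i)"
  let ?S = "\<lambda>l. \<Sum>i\<le>k. ?c i * matpow A N i r l"
  have "matpow (\<lambda>a b. A a b - (if a = b then 1 else 0)) N (Suc k) r j
      = (\<Sum>l\<le>N. ?S l * A l j - (if l = j then ?S l else 0))"
    unfolding matpow.simps by (intro sum.cong refl) (subst Suc.IH, auto simp: right_diff_distrib)
  also have "\<dots> = (\<Sum>l\<le>N. ?S l * A l j) - ?S j"
    using Suc.prems by (simp add: sum_subtractf)
  also have "(\<Sum>l\<le>N. ?S l * A l j) = (\<Sum>i\<le>k. ?c i * matpow A N (Suc i) r j)"
    by (simp add: sum_distrib_right sum_distrib_left mult.assoc sum.swap[of _ "{..N}"])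
  finally show ?case
    by (simp only: binomial_difference_Suc)
qed

lemma matexp_minus_identity:
  fixes A :: "nat \<Rightarrow> nat \<Rightarrow> real"
  assumes A: "row_norm_le N A M" and rj: "r \<le> N" "j \<le> N"
  shows "matexp (\<lambda>a b. A a b - (if a = b then 1 else 0)) N t r j = exp (- t) * matexp A N t r j"
proof -
  let ?a = "\<lambda>i. t ^ i / fact i * matpow A N i r j" and ?b = "\<lambda>m. (- t) ^ m / fact m"
  have summable_b: "summable (\<lambda>k. norm (?b k))"
    using sums_summable[OF exp_sums[of "\<bar>t\<bar>"]] by (simp add: power_abs)
  have "(\<lambda>k. \<Sum>i\<le>k. ?a i * ?b (k - i)) sums ((\<Sum>k. ?a k) * (\<Sum>k. ?b k))"
    using matexp_summable_abs[OF A rj] by (intro Cauchy_product_sums summable_b) simp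
  then have "(\<lambda>k. \<Sum>i\<le>k. ?a i * ?b (k - i)) sums (matexp A N t r j * exp (- t))"
    by (simp add: matexp_def sums_unique[OF exp_sums[of "- t"]])
  moreover have "(\<Sum>i\<le>k. ?a i * ?b (k - i))
      = t ^ k / fact k * matpow (\<lambda>a b. A a b - (if a = b then 1 else 0)) N k r j" for k
  proof -
    have "?a i * ?b (k - i) = t ^ k / fact k * (real (k choose i) * (-1) ^ (k - i) * matpow A N i r j)"
      if "i \<le> k" for i
      using that
      by (simp add: binomial_fact power_minus[of t] field_simps flip: power_add)
    then show ?thesis
      by (simp add: matpow_minus_identity[OF rj(2)] sum_distrib_left)
  qed
  ultimately show ?thesis
    unfolding matexp_def by (simp add: sums_iff mult.commute)
qed

section \<open>Poisson tail bounds\<close>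

text \<open>P(N_t < m) for a Poisson variable N_t with mean t (strict inequality).\<close>

definition poisson_cdf :: "real \<Rightarrow> nat \<Rightarrow> real" where
  "poisson_cdf t m = exp (- t) * (\<Sum>k<m. t ^ k / fact k)"

lemma poisson_cdf_nonneg: "0 \<le> t \<Longrightarrow> 0 \<le> poisson_cdf t m"
  by (simp add: poisson_cdf_def sum_nonneg)

lemma poisson_cdf_mono: "m \<le> m' \<Longrightarrow> 0 \<le> t \<Longrightarrow> poisson_cdf t m \<le> poisson_cdf t m'"
  unfolding poisson_cdf_def by (intro mult_left_mono sum_mono2) auto

lemma sum_exp_le_exp: "0 \<le> x \<Longrightarrow> (\<Sum>k<m. x ^ k / fact k) \<le> exp (x :: real)"
  using sum_le_suminf[OF sums_summable[OF exp_sums[of x]], of "{..<m}"] sums_unique[OF exp_sums[of x]]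
  by simp

lemma poisson_cdf_le_chernoff:
  assumes \<theta>: "0 < \<theta>" "\<theta> \<le> 1" and t: "0 \<le> t"
  shows "poisson_cdf t m \<le> exp (t * (\<theta> - 1)) / \<theta> ^ m"
proof -
  have "(\<Sum>k<m. t ^ k / fact k) \<le> (\<Sum>k<m. (t * \<theta>) ^ k / fact k / \<theta> ^ m)"
  proof (intro sum_mono)
    fix k assume "k \<in> {..<m}"
    then have "1 \<le> \<theta> ^ k / \<theta> ^ m"
      using \<theta> power_decreasing[of k m \<theta>] by simp
    then show "t ^ k / fact k \<le> (t * \<theta>) ^ k / fact k / \<theta> ^ m"
      using t mult_left_mono[of 1 "\<theta> ^ k / \<theta> ^ m" "t ^ k / fact k"] by (simp add: power_mult_distrib)
  qed
  also have "\<dots> \<le> exp (t * \<theta>) / \<theta> ^ m"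
    unfolding sum_divide_distrib[symmetric] using \<theta> t by (intro divide_right_mono sum_exp_le_exp) auto
  finally have "poisson_cdf t m \<le> exp (- t) * (exp (t * \<theta>) / \<theta> ^ m)"
    unfolding poisson_cdf_def by (intro mult_left_mono) auto
  also have "\<dots> = exp (t * (\<theta> - 1)) / \<theta> ^ m"
    by (simp add: exp_add[symmetric] algebra_simps)
  finally show ?thesis .
qed

lemma poisson_cdf_le_1: "0 \<le> t \<Longrightarrow> poisson_cdf t m \<le> 1"
  using poisson_cdf_le_chernoff[of 1 t m] by simp

lemma poisson_cdf_ge_chernoff:
  assumes \<theta>: "1 \<le> \<theta>" and t: "0 \<le> t"
  shows "1 - poisson_cdf t m \<le> exp (t * (\<theta> - 1)) / \<theta> ^ m"
proof -
  let ?x = "\<lambda>k. t ^ k / fact k"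
  have "(\<lambda>k. ?x k - (if k < m then ?x k else 0)) sums (exp t - (\<Sum>k<m. ?x k))"
    using sums_If_finite_set[of "{..<m}" ?x] by (intro sums_diff exp_sums) simp
  moreover have "(\<lambda>k. (t * \<theta>) ^ k / fact k / \<theta> ^ m) sums (exp (t * \<theta>) / \<theta> ^ m)"
    by (intro sums_divide exp_sums)
  moreover have "?x k - (if k < m then ?x k else 0) \<le> (t * \<theta>) ^ k / fact k / \<theta> ^ m" for k
  proof (cases "k < m")
    case False
    then have "1 \<le> \<theta> ^ k / \<theta> ^ m"
      using \<theta> power_increasing[of m k \<theta>] by simp
    then show ?thesis
      using False t mult_left_mono[of 1 "\<theta> ^ k / \<theta> ^ m" "?x k"] by (simp add: power_mult_distrib)
  qed (use t \<theta> in simp)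
  ultimately have "exp t - (\<Sum>k<m. ?x k) \<le> exp (t * \<theta>) / \<theta> ^ m"
    by (rule sums_le[rotated])
  then have "exp (- t) * (exp t - (\<Sum>k<m. ?x k)) \<le> exp (- t) * (exp (t * \<theta>) / \<theta> ^ m)"
    by (intro mult_left_mono) auto
  also have "exp (- t) * (exp t - (\<Sum>k<m. ?x k)) = 1 - poisson_cdf t m"
    by (simp add: poisson_cdf_def right_diff_distrib exp_minus_inverse mult.commute)
  also have "exp (- t) * (exp (t * \<theta>) / \<theta> ^ m) = exp (t * (\<theta> - 1)) / \<theta> ^ m"
    by (simp add: exp_add[symmetric] algebra_simps)
  finally show ?thesis .
qed

lemma x_exp_one_minus_lt_1:
  fixes x :: real
  assumes "0 < x" "x \<noteq> 1"
  shows "x * exp (1 - x) < 1"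
proof -
  have "x < exp (x - 1)"
    using exp_minus_greater[of "1 - x"] assms by simp
  then show ?thesis
    by (simp add: exp_diff field_simps)
qed

text \<open>\<theta> = 1/x is the optimal Chernoff parameter for the level m when the mean is m x.\<close>

lemma chernoff_bound_eq:
  assumes "0 < x"
  shows "exp (real m * x * (1 / x - 1)) / (1 / x) ^ k = x ^ k / x ^ m * (x * exp (1 - x)) ^ m"
proof -
  have "real m * x * (1 / x - 1) = real m * (1 - x)"
    using assms by (simp add: field_simps)
  then have "exp (real m * x * (1 / x - 1)) = exp (1 - x) ^ m"
    by (simp only: exp_of_nat_mult)
  then show ?thesis
    using assms by (simp add: power_mult_distrib power_one_over)
qed

lemma tendsto_mult_poisson_cdf_below_mean:
  assumes x: "1 < x"
  shows "(\<lambda>m. real m * poisson_cdf (real m * x) (Suc m)) \<longlonglongrightarrow> 0"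
proof (rule tendsto_sandwich)
  let ?q = "x * exp (1 - x)"
  have q: "0 \<le> ?q" "?q < 1"
    using x x_exp_one_minus_lt_1[of x] by auto
  show "\<forall>\<^sub>F m in sequentially. 0 \<le> real m * poisson_cdf (real m * x) (Suc m)"
    using x by (simp add: poisson_cdf_nonneg)
  show "\<forall>\<^sub>F m in sequentially. real m * poisson_cdf (real m * x) (Suc m) \<le> x * (real m * ?q ^ m)"
  proof (intro always_eventually allI)
    fix m
    have "poisson_cdf (real m * x) (Suc m) \<le> exp (real m * x * (1 / x - 1)) / (1 / x) ^ Suc m"
      using x by (intro poisson_cdf_le_chernoff) auto
    also have "\<dots> = x * ?q ^ m"
      unfolding chernoff_bound_eq[OF order.strict_trans[OF zero_less_one x]] using x by simp
    finally have "real m * poisson_cdf (real m * x) (Suc m) \<le> real m * (x * ?q ^ m)"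
      by (rule mult_left_mono) simp
    then show "real m * poisson_cdf (real m * x) (Suc m) \<le> x * (real m * ?q ^ m)"
      by (simp only: mult.left_commute)
  qed
  show "(\<lambda>m. x * (real m * ?q ^ m)) \<longlonglongrightarrow> 0"
    using tendsto_mult_right_zero[OF powser_times_n_limit_0[of ?q]] q by simp
qed simp

lemma poisson_cdf_above_mean_tendsto_1:
  assumes x: "0 \<le> x" "x < 1"
  shows "(\<lambda>m. poisson_cdf (real m * x) m) \<longlonglongrightarrow> 1"
proof -
  obtain r :: real where r: "0 \<le> r" "r < 1" and tail: "\<And>m. 1 - poisson_cdf (real m * x) m \<le> r ^ m"
  proof (cases "x = 0")
    case True
    then show ?thesis
      using that[of "1/2"] poisson_cdf_ge_chernoff[of 2 0] by (simp add: power_one_over)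
  next
    case False
    then have "0 < x" using x by simp
    show ?thesis
    proof (rule that)
      show "0 \<le> x * exp (1 - x)" "x * exp (1 - x) < 1"
        using \<open>0 < x\<close> x x_exp_one_minus_lt_1[of x] by auto
      fix m
      have "1 - poisson_cdf (real m * x) m \<le> exp (real m * x * (1 / x - 1)) / (1 / x) ^ m"
        using \<open>0 < x\<close> x by (intro poisson_cdf_ge_chernoff) auto
      then show "1 - poisson_cdf (real m * x) m \<le> (x * exp (1 - x)) ^ m"
        using \<open>0 < x\<close> by (simp add: chernoff_bound_eq)
    qed
  qed
  show ?thesis
  proof (rule tendsto_sandwich)
    show "\<forall>\<^sub>F m in sequentially. 1 - r ^ m \<le> poisson_cdf (real m * x) m"
      using tail by (simp add: algebra_simps)
    show "\<forall>\<^sub>F m in sequentially. poisson_cdf (real m * x) m \<le> 1"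
      using x by (simp add: poisson_cdf_le_1)
    show "(\<lambda>m. 1 - r ^ m) \<longlonglongrightarrow> 1"
      using tendsto_diff[OF tendsto_const LIMSEQ_power_zero[of r]] r by simp
  qed simp
qed

lemma poisson_cdf_double_tendsto_1:
  assumes "0 \<le> x" "x < 2"
  shows "(\<lambda>n. poisson_cdf (real n * x) (2*n)) \<longlonglongrightarrow> 1"
  using LIMSEQ_subseq_LIMSEQ[OF poisson_cdf_above_mean_tendsto_1[of "x/2"], of "\<lambda>n. 2*n"] assms
  by (simp add: strict_mono_def o_def)

section \<open>The chain without backward jumps\<close>

definition jump_fwd :: "nat \<Rightarrow> nat \<Rightarrow> nat \<Rightarrow> real" where
  "jump_fwd n i j =
     (if i = n then (if j = Suc n then 1 / real n else 0) + (if j = 2*n then 1 - 1 / real n else 0)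
      else if i < 2*n then (if j = Suc i then 1 else 0)
      else if i = 2*n then (if j = 2*n then 1 else 0) else 0)"

definition rate_bwd :: "nat \<Rightarrow> nat \<Rightarrow> nat \<Rightarrow> real" where
  "rate_bwd n i j = (if 0 < i \<and> j = i - 1 then (1/2) ^ (n^2) else 0)"

lemma rate_eq_jump_fwd_plus_rate_bwd:
  assumes "2 \<le> n" "i < 2*n"
  shows "rate n i j = jump_fwd n i j + rate_bwd n i j"
proof -
  have "(i = j + 1 \<and> i \<le> 2*n) \<longleftrightarrow> (0 < i \<and> j = i - 1)"
    using assms by arith
  moreover have "(if j = i + 1 \<and> i < 2*n then if i = n then 1 / real n else 1 else 0)
      + (if i = n \<and> j = 2*n then 1 - 1 / real n else 0) = jump_fwd n i j"
    using assms by (cases "i = n") (simp_all add: jump_fwd_def)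
  ultimately show ?thesis
    using assms unfolding rate_def rate_bwd_def by simp
qed

lemma jump_fwd_nonneg: "1 \<le> n \<Longrightarrow> 0 \<le> jump_fwd n i j"
  by (simp add: jump_fwd_def)

lemma jump_fwd_diag: "2 \<le> n \<Longrightarrow> i < 2*n \<Longrightarrow> jump_fwd n i i = 0"
  by (simp add: jump_fwd_def)

lemma rate_bwd_diag: "rate_bwd n i i = 0"
  by (auto simp: rate_bwd_def)

lemma sum_jump_fwd:
  assumes "2 \<le> n" "i \<le> 2*n"
  shows "(\<Sum>j\<le>2*n. jump_fwd n i j) = 1"
proof -
  consider "i = n" | "i \<noteq> n" "i < 2*n" | "i = 2*n" using assms(2) by linarith
  then show ?thesis using assms(1) by cases (simp_all add: jump_fwd_def sum.distrib)
qed

lemma sum_rate_bwd: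
  assumes "i \<le> 2*n"
  shows "(\<Sum>j\<le>2*n. rate_bwd n i j) = (if 0 < i then (1/2) ^ (n^2) else 0)"
  using assms by (auto simp: rate_bwd_def)

lemma gen_stopped_eq:
  assumes n: "2 \<le> n" and i: "i < 2*n"
  shows "gen_stopped n i j = jump_fwd n i j + rate_bwd n i j
           - (if j = i then 1 + (if 0 < i then (1/2) ^ (n^2) else 0) else 0)"
proof -
  have "(\<Sum>l\<in>{..2*n} - {i}. rate n i l) = (\<Sum>l\<le>2*n. jump_fwd n i l + rate_bwd n i l)"
    using n i by (simp add: sum_diff1 rate_eq_jump_fwd_plus_rate_bwd jump_fwd_diag rate_bwd_diag)
  also have "\<dots> = 1 + (if 0 < i then (1/2) ^ (n^2) else 0)"
    using n i by (simp add: sum.distrib sum_jump_fwd sum_rate_bwd)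
  finally show ?thesis
    using n i rate_eq_jump_fwd_plus_rate_bwd[OF n i, of j]
    by (cases "j = i") (simp_all add: gen_stopped_def jump_fwd_diag rate_bwd_diag)
qed

lemma row_norm_le_jump_fwd: "2 \<le> n \<Longrightarrow> row_norm_le (2*n) (jump_fwd n) 1"
  by (simp add: row_norm_le_def jump_fwd_nonneg sum_jump_fwd)

lemma row_norm_le_jump_fwd_minus_identity:
  assumes n: "2 \<le> n"
  shows "row_norm_le (2*n) (\<lambda>i j. jump_fwd n i j - (if i = j then 1 else 0)) 2"
  unfolding row_norm_le_def
proof (intro allI impI)
  fix i assume i: "i \<le> 2*n"
  have "(\<Sum>j\<le>2*n. \<bar>jump_fwd n i j - (if i = j then 1 else 0)\<bar>)
      \<le> (\<Sum>j\<le>2*n. jump_fwd n i j + (if i = j then 1 else 0))"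
    using n jump_fwd_nonneg[of n i] by (intro sum_mono) (auto simp: abs_if)
  also have "\<dots> = 2"
    using n i by (simp add: sum.distrib sum_jump_fwd)
  finally show "(\<Sum>j\<le>2*n. \<bar>jump_fwd n i j - (if i = j then 1 else 0)\<bar>) \<le> 2" .
qed

lemma row_norm_le_gen_stopped_minus_jump_fwd:
  assumes n: "2 \<le> n"
  shows "row_norm_le (2*n) (\<lambda>i j. gen_stopped n i j - (jump_fwd n i j - (if i = j then 1 else 0)))
           (2 * (1/2) ^ (n^2))"
  unfolding row_norm_le_def
proof (intro allI impI)
  fix i assume i: "i \<le> 2*n"
  let ?\<epsilon> = "(1/2::real) ^ (n^2)"
  show "(\<Sum>j\<le>2*n. \<bar>gen_stopped n i j - (jump_fwd n i j - (if i = j then 1 else 0))\<bar>) \<le> 2 * ?\<epsilon>"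
  proof (cases "i = 2*n")
    case True
    then show ?thesis
      using n by (intro order_trans[OF eq_refl[OF sum.neutral]]) (auto simp: gen_stopped_def jump_fwd_def)
  next
    case False
    then have "i < 2*n" using i by simp
    then have "(\<Sum>j\<le>2*n. \<bar>gen_stopped n i j - (jump_fwd n i j - (if i = j then 1 else 0))\<bar>)
        = (\<Sum>j\<le>2*n. rate_bwd n i j + (if j = i then (if 0 < i then ?\<epsilon> else 0) else 0))"
      using n by (intro sum.cong refl) (auto simp: gen_stopped_eq rate_bwd_def)
    also have "\<dots> \<le> 2 * ?\<epsilon>"
      using i by (simp add: sum.distrib sum_rate_bwd)
    finally show ?thesis .
  qed
qed

lemma matexp_gen_stopped_approx:
  assumes n: "2 \<le> n"
  shows "\<bar>matexp (gen_stopped n) (2*n) t 0 (2*n) - exp (- t) * matexp (jump_fwd n) (2*n) t 0 (2*n)\<bar>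
           \<le> 2 * (1/2) ^ (n^2) * exp (6 * \<bar>t\<bar>)"
proof -
  let ?Q = "\<lambda>i j. jump_fwd n i j - (if i = j then 1 else 0)"
  have Q: "row_norm_le (2*n) ?Q 3"
    using row_norm_le_mono[OF row_norm_le_jump_fwd_minus_identity[OF n]] by simp
  have "(1/2::real) ^ (n^2) \<le> 1/2"
    using n power_decreasing[of 1 "n^2" "1/2::real"] by simp
  then have G: "row_norm_le (2*n) (gen_stopped n) 3"
    using row_norm_le_mono[OF row_norm_le_add[OF row_norm_le_gen_stopped_minus_jump_fwd[OF n]
        row_norm_le_jump_fwd_minus_identity[OF n]]]
    by simp
  have "\<bar>matexp (gen_stopped n) (2*n) t 0 (2*n) - matexp ?Q (2*n) t 0 (2*n)\<bar>
      \<le> 2 * (1/2) ^ (n^2) * exp (2 * 3 * \<bar>t\<bar>)"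
    by (rule matexp_diff_le[OF G Q row_norm_le_gen_stopped_minus_jump_fwd[OF n]]) auto
  moreover have "matexp ?Q (2*n) t 0 (2*n) = exp (- t) * matexp (jump_fwd n) (2*n) t 0 (2*n)"
    by (rule matexp_minus_identity[OF row_norm_le_jump_fwd[OF n]]) auto
  ultimately show ?thesis by simp
qed

definition fwd_row :: "nat \<Rightarrow> nat \<Rightarrow> nat \<Rightarrow> real" where
  "fwd_row n k m =
     (if k \<le> n then (if m = k then 1 else 0)
      else if k < 2*n then (if m = k then 1 / real n else 0) + (if m = 2*n then 1 - 1 / real n else 0)
      else (if m = 2*n then 1 else 0))"

lemma sum_fwd_row_mult:
  assumes "2 \<le> n"
  shows "(\<Sum>l\<le>2*n. fwd_row n k l * f l)
       = (if k \<le> n then f k else if k < 2*n then f k / real n + (1 - 1 / real n) * f (2*n) else f (2*n))"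
  using assms by (simp add: fwd_row_def distrib_right sum.distrib if_distrib[of "\<lambda>x. x * _"] cong: if_cong)

lemma matpow_jump_fwd:
  assumes n: "2 \<le> n" and m: "m \<le> 2*n"
  shows "matpow (jump_fwd n) (2*n) k 0 m = fwd_row n k m"
  using m
proof (induction k arbitrary: m)
  case 0
  then show ?case by (simp add: fwd_row_def)
next
  case (Suc k)
  then have "matpow (jump_fwd n) (2*n) (Suc k) 0 m = (\<Sum>l\<le>2*n. fwd_row n k l * jump_fwd n l m)"
    by simp
  also have "\<dots> = fwd_row n (Suc k) m"
    using n by (simp add: sum_fwd_row_mult) (auto simp: fwd_row_def jump_fwd_def)
  finally show ?case .
qed

lemma fwd_row_absorbing:
  "2 \<le> n \<Longrightarrow> fwd_row n k (2*n) = (if k \<le> n then 0 else if k < 2*n then 1 - 1 / real n else 1)"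
  by (simp add: fwd_row_def)

definition surv_fwd :: "nat \<Rightarrow> real \<Rightarrow> real" where
  "surv_fwd n t = poisson_cdf t (Suc n) + (poisson_cdf t (2*n) - poisson_cdf t (Suc n)) / real n"

lemma exp_neg_matexp_jump_fwd:
  assumes n: "2 \<le> n"
  shows "exp (- t) * matexp (jump_fwd n) (2*n) t 0 (2*n) = 1 - surv_fwd n t"
proof -
  let ?x = "\<lambda>k. t ^ k / fact k"
  let ?p = "\<lambda>m k. if k < m then ?x k else 0"
  let ?S = "\<lambda>m. \<Sum>k<m. ?x k"
  have partial: "?p m sums ?S m" for m
    using sums_If_finite_set[of "{..<m}" ?x] by simp
  have "(\<lambda>k. ?x k - (?p (Suc n) k + (?p (2*n) k - ?p (Suc n) k) / real n))
      sums (exp t - (?S (Suc n) + (?S (2*n) - ?S (Suc n)) / real n))"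
    by (intro sums_diff sums_add sums_divide exp_sums partial)
  moreover have "?x k * matpow (jump_fwd n) (2*n) k 0 (2*n)
      = ?x k - (?p (Suc n) k + (?p (2*n) k - ?p (Suc n) k) / real n)" for k
    unfolding matpow_jump_fwd[OF n order_refl] fwd_row_absorbing[OF n] by (simp add: field_simps)
  ultimately have "matexp (jump_fwd n) (2*n) t 0 (2*n) = exp t - (?S (Suc n) + (?S (2*n) - ?S (Suc n)) / real n)"
    unfolding matexp_def by (simp add: sums_iff)
  then have "exp (- t) * matexp (jump_fwd n) (2*n) t 0 (2*n)
      = exp (- t) * exp t - exp (- t) * (?S (Suc n) + (?S (2*n) - ?S (Suc n)) / real n)"
    by (simp only: right_diff_distrib)
  also have "exp (- t) * exp t = 1"
    by (simp add: exp_minus_inverse mult.commute)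
  finally show ?thesis
    unfolding surv_fwd_def poisson_cdf_def by (simp add: algebra_simps diff_divide_distrib del: sum.lessThan_Suc)
qed

lemma surv_approx:
  assumes n: "2 \<le> n"
  shows "\<bar>surv n x - surv_fwd n (max 0 x)\<bar> \<le> 2 * (1/2) ^ (n^2) * exp (6 * max 0 x)"
proof -
  let ?t = "max 0 x"
  have "surv n x - surv_fwd n ?t
      = exp (- ?t) * matexp (jump_fwd n) (2*n) ?t 0 (2*n) - matexp (gen_stopped n) (2*n) ?t 0 (2*n)"
    by (simp add: surv_def exp_neg_matexp_jump_fwd[OF n])
  then show ?thesis
    using matexp_gen_stopped_approx[OF n, of ?t] by (simp add: abs_minus_commute)
qed

section \<open>Asymptotics\<close>

lemma poisson_cdf_le_surv_fwd:
  assumes "2 \<le> n" "0 \<le> t"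
  shows "poisson_cdf t (Suc n) \<le> surv_fwd n t"
  using assms poisson_cdf_mono[of "Suc n" "2*n" t] by (simp add: surv_fwd_def)

lemma surv_fwd_le_poisson_cdf:
  assumes "2 \<le> n" "0 \<le> t"
  shows "surv_fwd n t \<le> poisson_cdf t (2*n)"
proof -
  have "(poisson_cdf t (2*n) - poisson_cdf t (Suc n)) / real n \<le> (poisson_cdf t (2*n) - poisson_cdf t (Suc n)) / 1"
    using assms poisson_cdf_mono[of "Suc n" "2*n" t] by (intro divide_left_mono) auto
  then show ?thesis
    by (simp add: surv_fwd_def)
qed

lemma times_surv_fwd:
  "1 \<le> n \<Longrightarrow> real n * surv_fwd n t = (real n - 1) * poisson_cdf t (Suc n) + poisson_cdf t (2*n)"
  by (simp add: surv_fwd_def field_simps)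

lemma surv_fwd_tendsto_1:
  assumes x: "0 \<le> x" "x < 1"
  shows "(\<lambda>n. surv_fwd n (real n * x)) \<longlonglongrightarrow> 1"
proof (rule tendsto_sandwich)
  show "\<forall>\<^sub>F n in sequentially. poisson_cdf (real n * x) n \<le> surv_fwd n (real n * x)"
    using eventually_ge_at_top[of 2]
    by eventually_elim
      (use x in \<open>auto intro: order_trans[OF poisson_cdf_mono poisson_cdf_le_surv_fwd]\<close>)
  show "\<forall>\<^sub>F n in sequentially. surv_fwd n (real n * x) \<le> 1"
    using eventually_ge_at_top[of 2]
    by eventually_elim
      (use x in \<open>auto intro: order_trans[OF surv_fwd_le_poisson_cdf poisson_cdf_le_1]\<close>)
qed (use poisson_cdf_above_mean_tendsto_1[OF x] in auto)

lemma times_surv_fwd_tendsto_1: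
  assumes x: "1 < x" "x < 2"
  shows "(\<lambda>n. real n * surv_fwd n (real n * x)) \<longlonglongrightarrow> 1"
proof -
  have "(\<lambda>n. (real n - 1) * poisson_cdf (real n * x) (Suc n)) \<longlonglongrightarrow> 0"
  proof (rule tendsto_sandwich)
    show "\<forall>\<^sub>F n in sequentially. 0 \<le> (real n - 1) * poisson_cdf (real n * x) (Suc n)"
      using eventually_ge_at_top[of 1] by eventually_elim (use x in \<open>simp add: poisson_cdf_nonneg\<close>)
    show "\<forall>\<^sub>F n in sequentially. (real n - 1) * poisson_cdf (real n * x) (Suc n)
        \<le> real n * poisson_cdf (real n * x) (Suc n)"
      using x by (simp add: poisson_cdf_nonneg mult_right_mono)
  qed (use tendsto_mult_poisson_cdf_below_mean[OF x(1)] in auto)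
  then have "(\<lambda>n. (real n - 1) * poisson_cdf (real n * x) (Suc n) + poisson_cdf (real n * x) (2*n)) \<longlonglongrightarrow> 0 + 1"
    using poisson_cdf_double_tendsto_1[of x] x by (intro tendsto_add) auto
  moreover have "\<forall>\<^sub>F n in sequentially. (real n - 1) * poisson_cdf (real n * x) (Suc n) + poisson_cdf (real n * x) (2*n)
      = real n * surv_fwd n (real n * x)"
    using eventually_ge_at_top[of 1] by eventually_elim (simp add: times_surv_fwd)
  ultimately show ?thesis
    by (simp add: tendsto_cong)
qed

lemma times_surv_fwd_tendsto_0:
  assumes x: "2 < x"
  shows "(\<lambda>n. real n * surv_fwd n (real n * x)) \<longlonglongrightarrow> 0"
proof (rule tendsto_sandwich)
  show "\<forall>\<^sub>F n in sequentially. 0 \<le> real n * surv_fwd n (real n * x)"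
    using eventually_ge_at_top[of 2]
  proof eventually_elim
    case (elim n)
    then have "0 \<le> surv_fwd n (real n * x)"
      using x by (intro order_trans[OF poisson_cdf_nonneg poisson_cdf_le_surv_fwd]) auto
    then show ?case by simp
  qed
  show "\<forall>\<^sub>F n in sequentially. real n * surv_fwd n (real n * x) \<le> real n * poisson_cdf (real n * x) (Suc (2*n))"
    using eventually_ge_at_top[of 2]
    by eventually_elim
      (use x in \<open>auto intro: mult_left_mono order_trans[OF surv_fwd_le_poisson_cdf poisson_cdf_mono]\<close>)
  show "(\<lambda>n. real n * poisson_cdf (real n * x) (Suc (2*n))) \<longlonglongrightarrow> 0"
    using tendsto_mult_right_zero[OF LIMSEQ_subseq_LIMSEQ[OF tendsto_mult_poisson_cdf_below_mean[of "x/2"],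
        of "\<lambda>n. 2*n"], of "1/2"] x
    by (simp add: strict_mono_def o_def)
qed simp

lemma times_half_power_square_exp_tendsto_0:
  "(\<lambda>n. real n * ((1/2) ^ (n^2) * exp (c * real n))) \<longlonglongrightarrow> 0"
proof (rule tendsto_sandwich)
  show "\<forall>\<^sub>F n in sequentially. 0 \<le> real n * ((1/2::real) ^ (n^2) * exp (c * real n))"
    by simp
  have "(\<lambda>n. (1/2::real) ^ n * exp c) \<longlonglongrightarrow> 0"
    by (intro tendsto_mult_left_zero LIMSEQ_power_zero) simp
  then have small: "\<forall>\<^sub>F n in sequentially. (1/2::real) ^ n * exp c < 1/2"
    by (rule order_tendstoD) simp
  show "\<forall>\<^sub>F n in sequentially. real n * ((1/2) ^ (n^2) * exp (c * real n)) \<le> real n * (1/2) ^ n"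
    using small
  proof eventually_elim
    case (elim n)
    have "(1/2::real) ^ (n^2) * exp (c * real n) = ((1/2) ^ n * exp c) ^ n"
      by (simp add: power2_eq_square power_mult power_mult_distrib exp_of_nat_mult[symmetric] mult.commute)
    also have "\<dots> \<le> (1/2) ^ n"
      using elim by (intro power_mono) auto
    finally show ?case
      by (intro mult_left_mono) auto
  qed
  show "(\<lambda>n. real n * (1/2::real) ^ n) \<longlonglongrightarrow> 0"
    using powser_times_n_limit_0[of "1/2::real"] by simp
qed simp

lemma times_surv_minus_surv_fwd_tendsto_0:
  "(\<lambda>n. real n * (surv n (real n * s) - surv_fwd n (real n * max 0 s))) \<longlonglongrightarrow> 0"
proof (rule tendsto_rabs_zero_cancel, rule tendsto_sandwich)
  show "\<forall>\<^sub>F n in sequentially. 0 \<le> \<bar>real n * (surv n (real n * s) - surv_fwd n (real n * max 0 s))\<bar>"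
    by simp
  show "\<forall>\<^sub>F n in sequentially. \<bar>real n * (surv n (real n * s) - surv_fwd n (real n * max 0 s))\<bar>
      \<le> 2 * (real n * ((1/2) ^ (n^2) * exp (6 * max 0 s * real n)))"
    using eventually_ge_at_top[of 2]
  proof eventually_elim
    case (elim n)
    have "max 0 (real n * s) = real n * max 0 s"
      by (simp add: max_mult_distrib_left)
    then have "\<bar>surv n (real n * s) - surv_fwd n (real n * max 0 s)\<bar>
        \<le> 2 * ((1/2) ^ (n^2) * exp (6 * max 0 s * real n))"
      using surv_approx[OF elim, of "real n * s"] by (simp add: ac_simps)
    then have "real n * \<bar>surv n (real n * s) - surv_fwd n (real n * max 0 s)\<bar>
        \<le> real n * (2 * ((1/2) ^ (n^2) * exp (6 * max 0 s * real n)))"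
      by (rule mult_left_mono) simp
    then show ?case
      by (simp add: abs_mult mult.left_commute)
  qed
  show "(\<lambda>n. 2 * (real n * ((1/2::real) ^ (n^2) * exp (6 * max 0 s * real n)))) \<longlonglongrightarrow> 0"
    using tendsto_mult_right_zero[OF times_half_power_square_exp_tendsto_0, of 2] by simp
qed simp

theorem lemma3p4:
  fixes s :: real
  shows "(s < 1 \<longrightarrow> filterlim (\<lambda>n. real n * surv n (real n * s)) at_top sequentially)
       \<and> (1 < s \<and> s < 2 \<longrightarrow> (\<lambda>n. real n * surv n (real n * s)) \<longlonglongrightarrow> 1)
       \<and> (2 < s \<longrightarrow> (\<lambda>n. real n * surv n (real n * s)) \<longlonglongrightarrow> 0)"
proof (intro conjI impI)
  let ?d = "\<lambda>n. real n * (surv n (real n * s) - surv_fwd n (real n * max 0 s))"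
  let ?f = "\<lambda>n. real n * surv_fwd n (real n * max 0 s)"
  have split: "(\<lambda>n. real n * surv n (real n * s)) = (\<lambda>n. ?d n + ?f n)"
    by (simp add: algebra_simps)
  have d: "?d \<longlonglongrightarrow> 0"
    by (rule times_surv_minus_surv_fwd_tendsto_0)
  show "filterlim (\<lambda>n. real n * surv n (real n * s)) at_top sequentially" if "s < 1"
  proof -
    have "filterlim (\<lambda>n. surv_fwd n (real n * max 0 s) * real n) at_top sequentially"
      using that by (intro filterlim_tendsto_pos_mult_at_top[OF surv_fwd_tendsto_1]
          filterlim_real_sequentially) auto
    then show ?thesis
      unfolding split by (intro filterlim_tendsto_add_at_top[OF d]) (simp add: mult.commute)
  qed
  show "(\<lambda>n. real n * surv n (real n * s)) \<longlonglongrightarrow> 1" if "1 < s \<and> s < 2"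
    using tendsto_add[OF d times_surv_fwd_tendsto_1[of s]] that unfolding split by simp
  show "(\<lambda>n. real n * surv n (real n * s)) \<longlonglongrightarrow> 0" if "2 < s"
    using tendsto_add[OF d times_surv_fwd_tendsto_0[of s]] that unfolding split by simp
qed

end
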